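(* Let $(X,d)$ be a compact metric space and $F$ a semiflow on $X$. Let $x,y\in X$ with $y\in\mathcal R_{\mathcal S}$. If $x\succcurlyeq_{\mathcal S} y$, then $x\succcurlyeq_{\mathcal C} y$. In particular $\mathcal R_{\mathcal S}\subset\mathcal R_{\mathcal C}$.
   Context: A semiflow on a metric space $(X,d)$ is a continuous map $F:[0,\infty)\times X\to X$, $(t,x)\mapsto F^t(x)$, with $F^0=\mathrm{id}$ and $F^{t+s}=F^t\circ F^s$ for all $t,s\ge0$. A curve is piecewise continuous if it is continuous except at finitely many points, at which one-sided limits exist. Conley chains: for $\varepsilon>0$, $T>0$, an $(\varepsilon,T)$-chain from $x$ to $y$ is a finite sequence $x=x_0,\dots,x_N=y$ in $X$ with times $t_i\ge T$ such that $d(F^{t_i}(x_i),x_{i+1})<\varepsilon$ for $i=0,\dots,N-1$. Write $x\succcurlyeq_{\mathcal C} y$ if for every $\varepsilon>0$ and $T>0$ there is an $(\varepsilon,T)$-chain from $x$ to $y$. Shadow chains: for $T\ge1$, a piecewise continuous $\gamma:[0,T]\to X$ is $\varepsilon$-close to $F$ if $d(\gamma(t+\tau),F^\tau(\gamma(t)))<\varepsilon$ for every $\tau\in[0,1]$ and $t\in[0,T-\tau]$. An $\varepsilon$-chain from $x$ to $y$ is such a $\gamma$ with $\gamma(0)=x$, $\gamma(T)=y$. Write $x\succcurlyeq_{\mathcal S} y$ if for every $\varepsilon>0$ there is an $\varepsilon$-chain from $x$ to $y$. For $\star\in\{\mathcal C,\mathcal S\}$: $x$ is $\star$-chain-recurrent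 if $x$ is a fixed point of $F$ or there is $y$ with $x\succcurlyeq_\star y$ and $y\succcurlyeq_\star x$; $\mathcal R_\star$ denotes the set of $\star$-chain-recurrent points. *)

theory Defs
  imports "HOL-Analysis.Analysis"
begin

definition semiflow :: "(real \<Rightarrow> 'a::metric_space \<Rightarrow> 'a) \<Rightarrow> bool" where
  "semiflow F \<longleftrightarrow>
     continuous_on ({0..} \<times> UNIV) (\<lambda>(t, x). F t x) \<and>
     F 0 = id \<and>
     (\<forall>t s. t \<ge> 0 \<longrightarrow> s \<ge> 0 \<longrightarrow> F (t + s) = F t \<circ> F s)"

definition piecewise_cont :: "real \<Rightarrow> (real \<Rightarrow> 'a::metric_space) \<Rightarrow> bool" where
  "piecewise_cont T \<gamma> \<longleftrightarrow>
     (\<exists>S. finite S \<and>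
        (\<forall>t \<in> {0..T} - S. continuous (at t within {0..T}) \<gamma>) \<and>
        (\<forall>t \<in> S \<inter> {0..T}.
            (0 < t \<longrightarrow> (\<exists>l. (\<gamma> \<longlongrightarrow> l) (at_left t))) \<and>
            (t < T \<longrightarrow> (\<exists>l. (\<gamma> \<longlongrightarrow> l) (at_right t)))))"

definition eps_close :: "(real \<Rightarrow> 'a::metric_space \<Rightarrow> 'a) \<Rightarrow> real \<Rightarrow> real \<Rightarrow> (real \<Rightarrow> 'a) \<Rightarrow> bool" where
  "eps_close F \<epsilon> T \<gamma> \<longleftrightarrow>
     (\<forall>\<tau> \<in> {0..1}. \<forall>t \<in> {0..T - \<tau>}. dist (\<gamma> (t + \<tau>)) (F \<tau> (\<gamma> t)) < \<epsilon>)"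

definition shadow_chain :: "(real \<Rightarrow> 'a::metric_space \<Rightarrow> 'a) \<Rightarrow> real \<Rightarrow> 'a \<Rightarrow> 'a \<Rightarrow> real \<Rightarrow> (real \<Rightarrow> 'a) \<Rightarrow> bool" where
  "shadow_chain F \<epsilon> x y T \<gamma> \<longleftrightarrow>
     T \<ge> 1 \<and> piecewise_cont T \<gamma> \<and> eps_close F \<epsilon> T \<gamma> \<and> \<gamma> 0 = x \<and> \<gamma> T = y"

definition shadow_rel :: "(real \<Rightarrow> 'a::metric_space \<Rightarrow> 'a) \<Rightarrow> 'a \<Rightarrow> 'a \<Rightarrow> bool" where
  "shadow_rel F x y \<longleftrightarrow> (\<forall>\<epsilon>>0. \<exists>T \<gamma>. shadow_chain F \<epsilon> x y T \<gamma>)"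

definition conley_chain :: "(real \<Rightarrow> 'a::metric_space \<Rightarrow> 'a) \<Rightarrow> real \<Rightarrow> real \<Rightarrow> 'a \<Rightarrow> 'a \<Rightarrow> bool" where
  "conley_chain F \<epsilon> T x y \<longleftrightarrow>
     (\<exists>N::nat. \<exists>xs::nat \<Rightarrow> 'a. \<exists>ts::nat \<Rightarrow> real.
        N \<ge> 1 \<and> xs 0 = x \<and> xs N = y \<and>
        (\<forall>i<N. ts i \<ge> T \<and> dist (F (ts i) (xs i)) (xs (Suc i)) < \<epsilon>))"

definition conley_rel :: "(real \<Rightarrow> 'a::metric_space \<Rightarrow> 'a) \<Rightarrow> 'a \<Rightarrow> 'a \<Rightarrow> bool" where
  "conley_rel F x y \<longleftrightarrow> (\<forall>\<epsilon>>0. \<forall>T>0. conley_chain F \<epsilon> T x y)"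

definition fixed_point :: "(real \<Rightarrow> 'a \<Rightarrow> 'a) \<Rightarrow> 'a \<Rightarrow> bool" where
  "fixed_point F x \<longleftrightarrow> (\<forall>t\<ge>0. F t x = x)"

definition R_S :: "(real \<Rightarrow> 'a::metric_space \<Rightarrow> 'a) \<Rightarrow> 'a set" where
  "R_S F = {x. fixed_point F x \<or> (\<exists>y. shadow_rel F x y \<and> shadow_rel F y x)}"

definition R_C :: "(real \<Rightarrow> 'a::metric_space \<Rightarrow> 'a) \<Rightarrow> 'a set" where
  "R_C F = {x. fixed_point F x \<or> (\<exists>y. conley_rel F x y \<and> conley_rel F y x)}"

end

theory Submission
  imports Defs
begin

text \<open>Sampling an \<open>\<delta>\<close>-shadow chain of length \<open>L \<ge> 1\<close> at the times \<open>i L / \<lceil>L\<rceil>\<close> gives a discrete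
  \<open>\<delta>\<close>-pseudo-orbit whose jumps take time in \<open>[1/2, 1]\<close>. Since \<open>y\<close> is shadow-chain recurrent, such a pseudo-orbit can be looped at \<open>y\<close>, so there are
  pseudo-orbits from \<open>x\<close> to \<open>y\<close> with arbitrarily many jumps. By compactness, \<open>F\<close> is uniformly
  continuous on \<open>[0,1] \<times> X\<close>, hence a bounded number of consecutive \<open>\<delta>\<close>-jumps stays \<open>\<epsilon>\<close>-close to
  the true orbit. Grouping the jumps into blocks of \<open>K\<close> to \<open>2K\<close> jumps, with \<open>K \<ge> 2T\<close>, turns the
  pseudo-orbit into an \<open>(\<epsilon>, T)\<close>-chain.\<close>

definition pseudo_orbit :: "(real \<Rightarrow> 'a::metric_space \<Rightarrow> 'a) \<Rightarrow> real \<Rightarrow> nat \<Rightarrow> (nat \<Rightarrow> 'a) \<Rightarrow> (nat \<Rightarrow> real) \<Rightarrow> bool" where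
  "pseudo_orbit F \<delta> N xs ts \<longleftrightarrow> (\<forall>i<N. dist (F (ts i) (xs i)) (xs (Suc i)) < \<delta>)"

definition short_step_chain :: "(real \<Rightarrow> 'a::metric_space \<Rightarrow> 'a) \<Rightarrow> real \<Rightarrow> nat \<Rightarrow> 'a \<Rightarrow> 'a \<Rightarrow> bool" where
  "short_step_chain F \<delta> n a b \<longleftrightarrow>
     (\<exists>N xs ts. n \<le> N \<and> xs 0 = a \<and> xs N = b \<and> (\<forall>i<N. ts i \<in> {1/2..1}) \<and> pseudo_orbit F \<delta> N xs ts)"

lemma semiflow_uniformly_continuous_unit_interval:
  fixes F :: "real \<Rightarrow> 'a::metric_space \<Rightarrow> 'a"
  assumes "compact (UNIV :: 'a set)" and "semiflow F"
  shows "uniformly_continuous_on ({0..1} \<times> UNIV) (\<lambda>(t, x). F t x)"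
proof (rule compact_uniformly_continuous)
  show "continuous_on ({0..1} \<times> UNIV) (\<lambda>(t, x). F t x)"
    using assms(2) unfolding semiflow_def by (auto elim: continuous_on_subset)
  show "compact ({0..1::real} \<times> (UNIV :: 'a set))"
    by (intro compact_Times assms(1) compact_Icc)
qed

lemma uniformly_equicontinuous_unit_interval:
  fixes F :: "real \<Rightarrow> 'a::metric_space \<Rightarrow> 'b::metric_space"
  assumes "uniformly_continuous_on ({0..1} \<times> UNIV) (\<lambda>(t, x). F t x)" and "e > 0"
  shows "\<exists>\<eta>>0. \<forall>t\<in>{0..1}. \<forall>a b. dist a b < \<eta> \<longrightarrow> dist (F t a) (F t b) < e"
proof -
  obtain \<eta> where "\<eta> > 0" and \<eta>: "\<forall>p\<in>{0..1} \<times> UNIV. \<forall>q\<in>{0..1} \<times> UNIV.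
      dist q p < \<eta> \<longrightarrow> dist ((\<lambda>(t, x). F t x) q) ((\<lambda>(t, x). F t x) p) < e"
    using assms unfolding uniformly_continuous_on_def by metis
  have "dist (F t a) (F t b) < e" if "t \<in> {0..1}" "dist a b < \<eta>" for t a b
    using \<eta>[rule_format, of "(t, b)" "(t, a)"] that by (simp add: dist_Pair_Pair)
  with \<open>\<eta> > 0\<close> show ?thesis by blast
qed

lemma semiflow_pseudo_orbit_tracking:
  fixes F :: "real \<Rightarrow> 'a::metric_space \<Rightarrow> 'a"
  assumes "semiflow F" and uc: "uniformly_continuous_on ({0..1} \<times> UNIV) (\<lambda>(t, x). F t x)"
    and "\<epsilon> > 0"
  shows "\<exists>\<delta>>0. \<forall>xs ts j. j \<le> n \<longrightarrow> (\<forall>k<j. ts k \<in> {0..1}) \<longrightarrow> pseudo_orbit F \<delta> j xs ts \<longrightarrow>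
           dist (F (\<Sum>k<j. ts k) (xs 0)) (xs j) < \<epsilon>"
  using \<open>\<epsilon> > 0\<close>
proof (induction n arbitrary: \<epsilon>)
  case 0
  have "F 0 = id" using \<open>semiflow F\<close> unfolding semiflow_def by simp
  with 0 show ?case by (intro exI[of _ 1]) auto
next
  case (Suc n)
  obtain \<eta> where "\<eta> > 0" and \<eta>: "\<forall>t\<in>{0..1}. \<forall>a b. dist a b < \<eta> \<longrightarrow> dist (F t a) (F t b) < \<epsilon>/2"
    using uniformly_equicontinuous_unit_interval[OF uc, of "\<epsilon>/2"] Suc.prems by auto
  obtain \<delta> where "\<delta> > 0" and \<delta>: "\<forall>xs ts j. j \<le> n \<longrightarrow> (\<forall>k<j. ts k \<in> {0..1}) \<longrightarrow>
      pseudo_orbit F \<delta> j xs ts \<longrightarrow> dist (F (\<Sum>k<j. ts k) (xs 0)) (xs j) < min \<eta> \<epsilon>"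
    using Suc.IH[of "min \<eta> \<epsilon>"] \<open>\<eta> > 0\<close> Suc.prems by auto
  have "dist (F (\<Sum>k<j. ts k) (xs 0)) (xs j) < \<epsilon>"
    if "j \<le> Suc n" and ts: "\<forall>k<j. ts k \<in> {0..1}" and orbit: "pseudo_orbit F (min \<delta> (\<epsilon>/2)) j xs ts"
    for xs ts j
  proof (cases "j \<le> n")
    case True
    then show ?thesis using \<delta> ts orbit by (fastforce simp: pseudo_orbit_def)
  next
    case False
    with \<open>j \<le> Suc n\<close> have j: "j = Suc n" by simp
    define S where "S = (\<Sum>k<n. ts k)"
    have "S \<ge> 0" "ts n \<in> {0..1}" using ts j unfolding S_def by (auto intro: sum_nonneg)
    then have flow: "F (\<Sum>k<j. ts k) (xs 0) = F (ts n) (F S (xs 0))"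
      using \<open>semiflow F\<close> j unfolding semiflow_def S_def by (simp add: add.commute)
    have "dist (F S (xs 0)) (xs n) < \<eta>"
      using \<delta>[rule_format, of n ts xs] ts orbit j unfolding S_def pseudo_orbit_def by auto
    then have "dist (F (ts n) (F S (xs 0))) (F (ts n) (xs n)) < \<epsilon>/2"
      using \<eta> \<open>ts n \<in> {0..1}\<close> by blast
    moreover have "dist (F (ts n) (xs n)) (xs (Suc n)) < \<epsilon>/2"
      using orbit j unfolding pseudo_orbit_def by auto
    ultimately show ?thesis
      using flow j dist_triangle[of "F (ts n) (F S (xs 0))" "xs (Suc n)" "F (ts n) (xs n)"] by simp
  qed
  then show ?case using \<open>\<delta> > 0\<close> Suc.prems by (intro exI[of _ "min \<delta> (\<epsilon>/2)"]) auto
qed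

lemma shadow_chain_imp_short_step_chain:
  assumes "shadow_chain F \<delta> a b L \<gamma>"
  shows "short_step_chain F \<delta> 1 a b"
proof -
  have "L \<ge> 1" and close: "eps_close F \<delta> L \<gamma>" and "\<gamma> 0 = a" and "\<gamma> L = b"
    using assms unfolding shadow_chain_def by auto
  define m where "m = nat \<lceil>L\<rceil>"
  define s where "s = L / real m"
  have "m \<ge> 1" "L \<le> real m" "real m < L + 1"
    unfolding m_def using \<open>L \<ge> 1\<close> by linarith+
  then have s: "s \<in> {1/2..1}" and ms: "real m * s = L"
    using \<open>L \<ge> 1\<close> unfolding s_def by (auto simp: field_simps)
  have "dist (F s (\<gamma> (real i * s))) (\<gamma> (real (Suc i) * s)) < \<delta>" if "i < m" for i
  proof -
    have "real (Suc i) * s \<le> real m * s" using that s by (intro mult_right_mono) auto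
    then have "real i * s \<in> {0..L - s}" using ms s by (auto simp: algebra_simps)
    then show ?thesis
      using close s unfolding eps_close_def by (force simp: algebra_simps dist_commute)
  qed
  with \<open>m \<ge> 1\<close> \<open>\<gamma> 0 = a\<close> \<open>\<gamma> L = b\<close> ms s show ?thesis
    unfolding short_step_chain_def pseudo_orbit_def
    by (intro exI[of _ m] exI[of _ "\<lambda>i. \<gamma> (real i * s)"] exI[of _ "\<lambda>_. s"]) auto
qed

lemma short_step_chain_trans:
  assumes "short_step_chain F \<delta> n1 a b" and "short_step_chain F \<delta> n2 b c"
  shows "short_step_chain F \<delta> (n1 + n2) a c"
proof -
  obtain N1 xs1 ts1 where 1: "n1 \<le> N1" "xs1 0 = a" "xs1 N1 = b" "\<forall>i<N1. ts1 i \<in> {1/2..1}"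
      "pseudo_orbit F \<delta> N1 xs1 ts1"
    using assms(1) unfolding short_step_chain_def by blast
  obtain N2 xs2 ts2 where 2: "n2 \<le> N2" "xs2 0 = b" "xs2 N2 = c" "\<forall>i<N2. ts2 i \<in> {1/2..1}"
      "pseudo_orbit F \<delta> N2 xs2 ts2"
    using assms(2) unfolding short_step_chain_def by blast
  define xs where "xs i = (if i \<le> N1 then xs1 i else xs2 (i - N1))" for i
  define ts where "ts i = (if i < N1 then ts1 i else ts2 (i - N1))" for i
  have "dist (F (ts i) (xs i)) (xs (Suc i)) < \<delta>" if "i < N1 + N2" for i
  proof (cases "i < N1")
    case True
    then show ?thesis using 1(5) unfolding xs_def ts_def pseudo_orbit_def by auto
  next
    case False
    then have "i - N1 < N2" "Suc i - N1 = Suc (i - N1)" using that by auto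
    then show ?thesis using False 1(3) 2(2,5) unfolding xs_def ts_def pseudo_orbit_def by auto
  qed
  moreover have "\<forall>i<N1 + N2. ts i \<in> {1/2..1}" using 1(4) 2(4) unfolding ts_def by auto
  moreover have "xs 0 = a" "xs (N1 + N2) = c" using 1 2 unfolding xs_def by auto
  ultimately show ?thesis using 1(1) 2(1) unfolding short_step_chain_def pseudo_orbit_def
    by (intro exI[of _ "N1 + N2"] exI[of _ xs] exI[of _ ts]) auto
qed

lemma short_step_chain_mono: "short_step_chain F \<delta> n a b \<Longrightarrow> m \<le> n \<Longrightarrow> short_step_chain F \<delta> m a b"
  unfolding short_step_chain_def by (blast intro: le_trans)

lemma short_step_chain_pump:
  assumes "short_step_chain F \<delta> 1 x y" and "short_step_chain F \<delta> 1 y y"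
  shows "short_step_chain F \<delta> n x y"
proof (induction n)
  case 0
  then show ?case using assms(1) by (rule short_step_chain_mono) simp
next
  case (Suc n)
  then show ?case using short_step_chain_trans[OF Suc assms(2)] by simp
qed

lemma R_S_short_step_loop:
  assumes "y \<in> R_S F" and "\<delta> > 0"
  shows "short_step_chain F \<delta> 1 y y"
proof (cases "fixed_point F y")
  case True
  then have "F 1 y = y" unfolding fixed_point_def by simp
  with \<open>\<delta> > 0\<close> show ?thesis unfolding short_step_chain_def pseudo_orbit_def
    by (intro exI[of _ 1] exI[of _ "\<lambda>_. y"] exI[of _ "\<lambda>_. 1"]) auto
next
  case False
  then obtain z where "shadow_rel F y z" "shadow_rel F z y"
    using assms(1) unfolding R_S_def by auto
  then have "short_step_chain F \<delta> 1 y z" "short_step_chain F \<delta> 1 z y"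
    using \<open>\<delta> > 0\<close> shadow_chain_imp_short_step_chain unfolding shadow_rel_def by blast+
  from short_step_chain_trans[OF this] show ?thesis by (rule short_step_chain_mono) simp
qed

lemma short_step_chain_imp_conley_chain:
  assumes track: "\<And>xs ts j. j \<le> 2 * K \<Longrightarrow> \<forall>k<j. ts k \<in> {0..1} \<Longrightarrow> pseudo_orbit F \<delta> j xs ts \<Longrightarrow>
                      dist (F (\<Sum>k<j. ts k) (xs 0)) (xs j) < \<epsilon>"
    and "1 \<le> K" and "T \<le> real K / 2" and "short_step_chain F \<delta> K x y"
  shows "conley_chain F \<epsilon> T x y"
proof -
  obtain N xs ts where "K \<le> N" "xs 0 = x" "xs N = y" and ts: "\<forall>i<N. ts i \<in> {1/2..1}"
    and orbit: "pseudo_orbit F \<delta> N xs ts"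
    using assms(4) unfolding short_step_chain_def by blast
  define q where "q = N div K"
  have "q \<ge> 1" unfolding q_def using \<open>K \<le> N\<close> \<open>1 \<le> K\<close> by (simp add: div_greater_zero_iff Suc_le_eq)
  have N: "N = q * K + N mod K" "N mod K < K" unfolding q_def using \<open>1 \<le> K\<close> by auto
  \<comment> \<open>\<open>q\<close> blocks of \<open>K\<close> jumps each, the last one absorbing the remaining \<open>N mod K\<close> jumps\<close>
  define stop where "stop g = (if Suc g < q then Suc g * K else N)" for g
  define xs' where "xs' g = (if g < q then xs (g * K) else y)" for g
  define ts' where "ts' g = (\<Sum>k < stop g - g * K. ts (g * K + k))" for g
  have block: "K \<le> stop g - g * K \<and> stop g - g * K \<le> 2 * K \<and> g * K \<le> stop g \<and> stop g \<le> N"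
    if "g < q" for g
  proof (cases "Suc g < q")
    case True
    have "Suc g * K \<le> q * K" using True by (intro mult_right_mono) auto
    then show ?thesis using True N unfolding stop_def by auto
  next
    case False
    then have "q = Suc g" using that by simp
    then show ?thesis using N unfolding stop_def by (auto simp: algebra_simps)
  qed
  have "T \<le> ts' g \<and> dist (F (ts' g) (xs' g)) (xs' (Suc g)) < \<epsilon>" if "g < q" for g
  proof -
    define j where "j = stop g - g * K"
    have j: "K \<le> j" "j \<le> 2 * K" "g * K + j = stop g" "stop g \<le> N"
      using block[OF that] unfolding j_def by auto
    have steps: "\<forall>k<j. ts (g * K + k) \<in> {1/2..1}" using ts j by auto
    have "real K / 2 \<le> (\<Sum>k<j. 1/2)" using j by simp
    also have "\<dots> \<le> ts' g" unfolding ts'_def j_def[symmetric] using steps by (intro sum_mono) auto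
    finally have "T \<le> ts' g" using assms(3) by linarith
    moreover have "dist (F (ts' g) (xs (g * K))) (xs (g * K + j)) < \<epsilon>"
      using track[of j "\<lambda>k. ts (g * K + k)" "\<lambda>k. xs (g * K + k)"] steps orbit j
      unfolding ts'_def j_def[symmetric] pseudo_orbit_def by fastforce
    moreover have "xs' (Suc g) = xs (stop g)" using \<open>xs N = y\<close> unfolding xs'_def stop_def by auto
    ultimately show ?thesis using that j unfolding xs'_def by simp
  qed
  with \<open>q \<ge> 1\<close> \<open>xs 0 = x\<close> show ?thesis unfolding conley_chain_def
    by (intro exI[of _ q] exI[of _ xs'] exI[of _ ts']) (auto simp: xs'_def)
qed

lemma shadow_rel_imp_conley_rel:
  fixes F :: "real \<Rightarrow> 'a::metric_space \<Rightarrow> 'a"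
  assumes "compact (UNIV :: 'a set)" and "semiflow F" and "y \<in> R_S F" and "shadow_rel F x y"
  shows "conley_rel F x y"
  unfolding conley_rel_def
proof (intro allI impI)
  fix \<epsilon> T :: real
  assume "\<epsilon> > 0" "T > 0"
  define K where "K = nat \<lceil>2 * T\<rceil> + 1"
  have "1 \<le> K" "T \<le> real K / 2"
    unfolding K_def using real_nat_ceiling_ge[of "2 * T"] by auto
  obtain \<delta> where "\<delta> > 0" and track: "\<forall>xs ts j. j \<le> 2 * K \<longrightarrow> (\<forall>k<j. ts k \<in> {0..1}) \<longrightarrow>
      pseudo_orbit F \<delta> j xs ts \<longrightarrow> dist (F (\<Sum>k<j. ts k) (xs 0)) (xs j) < \<epsilon>"
    using semiflow_pseudo_orbit_tracking[OF \<open>semiflow F\<close>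
        semiflow_uniformly_continuous_unit_interval[OF assms(1,2)] \<open>\<epsilon> > 0\<close>] by blast
  have "short_step_chain F \<delta> 1 x y"
    using assms(4) \<open>\<delta> > 0\<close> shadow_chain_imp_short_step_chain unfolding shadow_rel_def by blast
  then have "short_step_chain F \<delta> K x y"
    using short_step_chain_pump R_S_short_step_loop[OF assms(3) \<open>\<delta> > 0\<close>] by blast
  with track \<open>1 \<le> K\<close> \<open>T \<le> real K / 2\<close> show "conley_chain F \<epsilon> T x y"
    by (intro short_step_chain_imp_conley_chain) auto
qed

theorem proposition3p5:
  fixes F :: "real \<Rightarrow> 'a::metric_space \<Rightarrow> 'a" and x y :: 'a
  assumes "compact (UNIV :: 'a set)"
    and "semiflow F"
    and "y \<in> R_S F"
    and "shadow_rel F x y"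
  shows "conley_rel F x y \<and> R_S F \<subseteq> R_C F"
proof
  show "conley_rel F x y" using shadow_rel_imp_conley_rel assms .
  show "R_S F \<subseteq> R_C F"
  proof
    fix w assume w: "w \<in> R_S F"
    show "w \<in> R_C F"
    proof (cases "fixed_point F w")
      case True
      then show ?thesis unfolding R_C_def by simp
    next
      case False
      then obtain z where "shadow_rel F w z" "shadow_rel F z w" using w unfolding R_S_def by auto
      moreover have "z \<in> R_S F" using calculation unfolding R_S_def by auto
      ultimately have "conley_rel F w z" "conley_rel F z w"
        using shadow_rel_imp_conley_rel[OF assms(1,2)] w by blast+
      then show ?thesis unfolding R_C_def by auto
    qed
  qed
qed

end
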